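(* Let $M^2$ be a strongly regular minimal surface of general type in $\mathbb R^4$, parameterized by semi-canonical parameters $(u,v)$, with invariants $\mu,\nu$. Then the function $E\sqrt{|\mu^2-\nu^2|}$ does not depend on $v$, and the function $G\sqrt{|\mu^2-\nu^2|}$ does not depend on $u$.
   Context: $\mathbb R^4$ carries the standard metric $g=\langle\cdot,\cdot\rangle$ and flat connection $\nabla'$; everything is smooth and local. For a regular surface $M^2: z=z(u,v)$ let $E,F,G$ be the first fundamental form coefficients, $\sigma$ the second fundamental form, $K$ the Gauss curvature, and $\varkappa$ the curvature of the normal connection, $\varkappa=g(R^\perp(x,y)n_2,n_1)$ for a positively oriented orthonormal frame $(x,y,n_1,n_2)$ with $x,y$ tangent. Minimal means $\sigma(x,x)+\sigma(y,y)=0$ for orthonormal tangent $x,y$. A minimal surface is of general type if $K^2-\varkappa^2>0$ and $\varkappa\neq0$ everywhere. The ellipse of curvature at $p$ is $\{\sigma(v,v): v\in T_pM^2,\ |v|=1\}$; a tangent line is canonical if it is collinear with an axis of this ellipse. The geometric frame is a positively oriented orthonormal frame $\{x,y,n_1,n_2\}$ with $x,y$ canonical tangent fields and $n_1,n_2$ normal, satisfying $\nabla'_xx=\gamma_1y+\nu n_1$, $\nabla'_xy=-\gamma_1x+\mu n_2$, $\nabla'_yx=-\gamma_2y+\mu n_2$, $\nabla'_yy=\gamma_2x-\nu n_1$, $\nabla'_xn_1=-\nu x+\beta_1n_2$, $\nabla'_yn_1=\nu y+\beta_2n_2$, $\nabla'_xn_2=-\mu y-\beta_1n_1$, $\nabla'_yn_2=-\mu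 x-\beta_2n_1$, with $\mu>0$, $\nu\ne0$, $\mu^2\ne\nu^2$; the functions $\nu,\mu,\gamma_1,\gamma_2,\beta_1,\beta_2$ are the invariants of $M^2$. Parameters $(u,v)$ are semi-canonical if the parametric lines are integral curves of the canonical tangents, with $F=0$, $x=z_u/\sqrt E$, $y=z_v/\sqrt G$; then $\gamma_1=-y(\ln\sqrt E)$, $\gamma_2=-x(\ln\sqrt G)$. A minimal surface of general type is strongly regular if $\gamma_1\gamma_2\neq0$ everywhere. *)

theory Defs
  imports "HOL-Analysis.Analysis"
begin

fun Ck_on :: "nat \<Rightarrow> (real \<times> real) set \<Rightarrow> (real \<times> real \<Rightarrow> 'a::real_normed_vector) \<Rightarrow> bool" where
  "Ck_on 0 U f = continuous_on U f"
| "Ck_on (Suc k) U f =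
     (\<exists>fu fv. (\<forall>p\<in>U. (f has_derivative (\<lambda>h. fst h *\<^sub>R fu p + snd h *\<^sub>R fv p)) (at p))
              \<and> Ck_on k U fu \<and> Ck_on k U fv)"

definition smooth_on2 :: "(real \<times> real) set \<Rightarrow> (real \<times> real \<Rightarrow> 'a::real_normed_vector) \<Rightarrow> bool" where
  "smooth_on2 U f \<longleftrightarrow> (\<forall>k. Ck_on k U f)"

definition pu :: "(real \<times> real \<Rightarrow> 'a::real_normed_vector) \<Rightarrow> real \<times> real \<Rightarrow> 'a" where
  "pu f p = vector_derivative (\<lambda>t. f (t, snd p)) (at (fst p))"

definition pv :: "(real \<times> real \<Rightarrow> 'a::real_normed_vector) \<Rightarrow> real \<times> real \<Rightarrow> 'a" where
  "pv f p = vector_derivative (\<lambda>t. f (fst p, t)) (at (snd p))"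

definition fundE :: "(real \<times> real \<Rightarrow> real^4) \<Rightarrow> real \<times> real \<Rightarrow> real" where
  "fundE z p = pu z p \<bullet> pu z p"
definition fundF :: "(real \<times> real \<Rightarrow> real^4) \<Rightarrow> real \<times> real \<Rightarrow> real" where
  "fundF z p = pu z p \<bullet> pv z p"
definition fundG :: "(real \<times> real \<Rightarrow> real^4) \<Rightarrow> real \<times> real \<Rightarrow> real" where
  "fundG z p = pv z p \<bullet> pv z p"

definition pos_orthonormal :: "real^4 \<Rightarrow> real^4 \<Rightarrow> real^4 \<Rightarrow> real^4 \<Rightarrow> bool" where
  "pos_orthonormal a b c d \<longleftrightarrow>
     (let L = [a, b, c, d] in
       (\<forall>i<4. \<forall>j<4. (L!i) \<bullet> (L!j) = (if i = j then 1 else 0)))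
     \<and> det (vector [a, b, c, d] :: real^4^4) > 0"

text \<open>Here \<nabla>'_x X = (\<partial>_u X)/sqrt E and \<nabla>'_y X = (\<partial>_v X)/sqrt G, since x = z_u/sqrt E, y = z_v/sqrt G.\<close>
definition semicanonical_geometric_frame ::
  "(real \<times> real) set \<Rightarrow> (real \<times> real \<Rightarrow> real^4) \<Rightarrow>
   (real \<times> real \<Rightarrow> real^4) \<Rightarrow> (real \<times> real \<Rightarrow> real^4) \<Rightarrow> (real \<times> real \<Rightarrow> real^4) \<Rightarrow> (real \<times> real \<Rightarrow> real^4) \<Rightarrow>
   (real \<times> real \<Rightarrow> real) \<Rightarrow> (real \<times> real \<Rightarrow> real) \<Rightarrow> (real \<times> real \<Rightarrow> real) \<Rightarrow>
   (real \<times> real \<Rightarrow> real) \<Rightarrow> (real \<times> real \<Rightarrow> real) \<Rightarrow> (real \<times> real \<Rightarrow> real) \<Rightarrow> bool" where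
  "semicanonical_geometric_frame U z x y n1 n2 \<nu> \<mu> \<gamma>1 \<gamma>2 \<beta>1 \<beta>2 \<longleftrightarrow>
     open U \<and> smooth_on2 U z \<and> smooth_on2 U n1 \<and> smooth_on2 U n2 \<and>
     smooth_on2 U \<nu> \<and> smooth_on2 U \<mu> \<and> smooth_on2 U \<gamma>1 \<and> smooth_on2 U \<gamma>2 \<and>
     smooth_on2 U \<beta>1 \<and> smooth_on2 U \<beta>2 \<and>
     (\<forall>p\<in>U.
        fundE z p > 0 \<and> fundG z p > 0 \<and> fundF z p = 0 \<and>
        x p = (1 / sqrt (fundE z p)) *\<^sub>R pu z p \<and>
        y p = (1 / sqrt (fundG z p)) *\<^sub>R pv z p \<and>
        pos_orthonormal (x p) (y p) (n1 p) (n2 p) \<and>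
        \<mu> p > 0 \<and> \<nu> p \<noteq> 0 \<and> (\<mu> p)\<^sup>2 \<noteq> (\<nu> p)\<^sup>2 \<and>
        (1 / sqrt (fundE z p)) *\<^sub>R pu x p = \<gamma>1 p *\<^sub>R y p + \<nu> p *\<^sub>R n1 p \<and>
        (1 / sqrt (fundE z p)) *\<^sub>R pu y p = - \<gamma>1 p *\<^sub>R x p + \<mu> p *\<^sub>R n2 p \<and>
        (1 / sqrt (fundG z p)) *\<^sub>R pv x p = - \<gamma>2 p *\<^sub>R y p + \<mu> p *\<^sub>R n2 p \<and>
        (1 / sqrt (fundG z p)) *\<^sub>R pv y p = \<gamma>2 p *\<^sub>R x p - \<nu> p *\<^sub>R n1 p \<and>
        (1 / sqrt (fundE z p)) *\<^sub>R pu n1 p = - \<nu> p *\<^sub>R x p + \<beta>1 p *\<^sub>R n2 p \<and>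
        (1 / sqrt (fundG z p)) *\<^sub>R pv n1 p = \<nu> p *\<^sub>R y p + \<beta>2 p *\<^sub>R n2 p \<and>
        (1 / sqrt (fundE z p)) *\<^sub>R pu n2 p = - \<mu> p *\<^sub>R y p - \<beta>1 p *\<^sub>R n1 p \<and>
        (1 / sqrt (fundG z p)) *\<^sub>R pv n2 p = - \<mu> p *\<^sub>R x p - \<beta>2 p *\<^sub>R n1 p)"

end

theory Submission
  imports Defs
begin

text \<open>
  Write L = z_uu . n1, M = z_uv . n2.  The Weingarten formulas of the geometric frame give
  L = E nu and M = sqrt(EG) mu, so the quantity  E M^2 / G - L^2  equals E^2 (mu^2 - nu^2).
  Differentiating it in v and using the Codazzi-type identities (from the symmetry of the third
  derivatives of z) shows that it is constant along the v-lines; since mu^2 \<noteq> nu^2 it does not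
  vanish, and E sqrt|mu^2 - nu^2| is the square root of its modulus.  The u-statement follows by
  exchanging the roles of u and v.
\<close>

abbreviation partials_at ::
  "(real \<times> real \<Rightarrow> 'a::real_normed_vector) \<Rightarrow> 'a \<Rightarrow> 'a \<Rightarrow> real \<times> real \<Rightarrow> bool" where
  "partials_at f fu fv p \<equiv> (f has_derivative (\<lambda>h. fst h *\<^sub>R fu + snd h *\<^sub>R fv)) (at p)"

lemma partials_at_u_line:
  assumes "partials_at f fu fv (s, c)"
  shows "((\<lambda>t. f (t, c)) has_vector_derivative fu) (at s)"
proof -
  have "((\<lambda>t. (t, c)) has_derivative (\<lambda>h. (h, 0))) (at s)"
    by (auto intro!: derivative_eq_intros)
  from has_derivative_compose[OF this assms]
  show ?thesis unfolding has_vector_derivative_def by simp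
qed

lemma partials_at_v_line:
  assumes "partials_at f fu fv (c, s)"
  shows "((\<lambda>t. f (c, t)) has_vector_derivative fv) (at s)"
proof -
  have "((\<lambda>t. (c, t)) has_derivative (\<lambda>h. (0, h))) (at s)"
    by (auto intro!: derivative_eq_intros)
  from has_derivative_compose[OF this assms]
  show ?thesis unfolding has_vector_derivative_def by simp
qed

lemma pu_eq: "partials_at f fu fv q \<Longrightarrow> pu f q = fu"
  using vector_derivative_at[OF partials_at_u_line[of f fu fv "fst q" "snd q"]]
  by (simp add: pu_def)

lemma pv_eq: "partials_at f fu fv q \<Longrightarrow> pv f q = fv"
  using vector_derivative_at[OF partials_at_v_line[of f fu fv "fst q" "snd q"]]
  by (simp add: pv_def)

lemma partials_unique:
  assumes "partials_at f fu fv p" "partials_at f gu gv p"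
  shows "fu = gu \<and> fv = gv"
  using pu_eq[OF assms(1)] pu_eq[OF assms(2)] pv_eq[OF assms(1)] pv_eq[OF assms(2)] by simp

lemma open_v_line: "open U \<Longrightarrow> open {t. (c, t) \<in> U}"
proof -
  assume "open U"
  moreover have "continuous_on UNIV (Pair c)" by (intro continuous_intros)
  ultimately have "open (Pair c -` U)" by (rule open_vimage)
  then show ?thesis by (simp add: vimage_def)
qed

lemma pv_cong_open:
  assumes "open U" "q \<in> U" "\<forall>r\<in>U. f r = g r"
  shows "pv f q = pv g q"
proof -
  have "eventually (\<lambda>t. (fst q, t) \<in> U) (nhds (snd q))"
    using eventually_nhds_in_open[OF open_v_line[OF assms(1)], of "snd q" "fst q"] assms(2) by simp
  then have "eventually (\<lambda>t. t \<in> UNIV \<longrightarrow> f (fst q, t) = g (fst q, t)) (nhds (snd q))"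
    by eventually_elim (use assms(3) in simp)
  from vector_derivative_cong_eq[OF this refl refl UNIV_I] show ?thesis
    by (simp add: pv_def)
qed

lemma Ck_on_cong:
  assumes "open U" "\<forall>q\<in>U. f q = g q" "Ck_on k U f"
  shows "Ck_on k U g"
  using assms(2,3)
proof (induction k arbitrary: f g)
  case 0
  then show ?case using continuous_on_cong by fastforce
next
  case (Suc k)
  then obtain fu fv where "\<forall>p\<in>U. partials_at f (fu p) (fv p) p" "Ck_on k U fu" "Ck_on k U fv"
    by auto
  moreover have "partials_at g (fu p) (fv p) p" if "p \<in> U" "partials_at f (fu p) (fv p) p" for p
    using has_derivative_transform_within_open[OF that(2) assms(1) that(1)] Suc.prems(1) by simp
  ultimately show ?case unfolding Ck_on.simps by blast
qed

lemma Ck_on_SucD: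
  assumes "open U" "Ck_on (Suc k) U f"
  shows "\<forall>q\<in>U. partials_at f (pu f q) (pv f q) q" "Ck_on k U (pu f)" "Ck_on k U (pv f)"
proof -
  obtain fu fv where d: "\<forall>q\<in>U. partials_at f (fu q) (fv q) q" and "Ck_on k U fu" "Ck_on k U fv"
    using assms(2) by auto
  moreover have "\<forall>q\<in>U. fu q = pu f q \<and> fv q = pv f q"
    using d pu_eq pv_eq by metis
  ultimately show "\<forall>q\<in>U. partials_at f (pu f q) (pv f q) q" "Ck_on k U (pu f)" "Ck_on k U (pv f)"
    using Ck_on_cong[OF assms(1), of fu "pu f" k] Ck_on_cong[OF assms(1), of fv "pv f" k] by auto
qed

lemma Ck_on_continuous: "Ck_on k U f \<Longrightarrow> continuous_on U f"
  by (cases k) (auto intro: continuous_at_imp_continuous_on has_derivative_continuous)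

lemma Ck_on_Suc_imp: "Ck_on (Suc k) U f \<Longrightarrow> Ck_on k U f"
proof (induction k arbitrary: f)
  case 0
  then have "continuous_on U f" by (rule Ck_on_continuous)
  then show ?case by simp
next
  case (Suc k)
  then obtain fu fv where "\<forall>p\<in>U. partials_at f (fu p) (fv p) p" "Ck_on (Suc k) U fu" "Ck_on (Suc k) U fv"
    unfolding Ck_on.simps(2)[of "Suc k"] by blast
  with Suc.IH show ?case unfolding Ck_on.simps(2)[of k] by blast
qed

lemma partials_at_swap:
  assumes "partials_at f fu fv (prod.swap q)"
  shows "partials_at (f \<circ> prod.swap) fv fu q"
proof -
  have "(prod.swap has_derivative prod.swap) (at q)"
    by (auto intro!: derivative_eq_intros simp: prod.swap_def[abs_def])
  from has_derivative_compose[OF this assms] show ?thesis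
    by (simp add: o_def add.commute)
qed

lemma pu_swap: "pu (f \<circ> prod.swap) q = pv f (prod.swap q)"
  and pv_swap: "pv (f \<circ> prod.swap) q = pu f (prod.swap q)"
  by (simp_all add: pu_def pv_def)

lemma Ck_on_swap: "Ck_on k U f \<Longrightarrow> Ck_on k (prod.swap -` U) (f \<circ> prod.swap)"
proof (induction k arbitrary: f)
  case 0
  then show ?case
    by (auto intro!: continuous_on_compose2[of U f] continuous_intros)
next
  case (Suc k)
  then obtain fu fv where "\<forall>p\<in>U. partials_at f (fu p) (fv p) p" "Ck_on k U fu" "Ck_on k U fv"
    by auto
  moreover have "\<forall>q\<in>prod.swap -` U. partials_at (f \<circ> prod.swap) ((fv \<circ> prod.swap) q) ((fu \<circ> prod.swap) q) q"
    using calculation(1) by (auto intro: partials_at_swap)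
  ultimately show ?case using Suc.IH unfolding Ck_on.simps by blast
qed

lemma has_vector_derivative_inner:
  fixes f g :: "real \<Rightarrow> 'a::real_inner"
  assumes "(f has_vector_derivative f') (at t)" "(g has_vector_derivative g') (at t)"
  shows "((\<lambda>s. f s \<bullet> g s) has_real_derivative (f' \<bullet> g t + f t \<bullet> g')) (at t)"
  using has_derivative_inner[OF assms[unfolded has_vector_derivative_def]]
  unfolding has_field_derivative_def
  by (rule has_derivative_eq_rhs) (auto simp: fun_eq_iff algebra_simps inner_commute)

lemma second_difference_mvt:
  fixes f fu fuv :: "real \<times> real \<Rightarrow> real"
  assumes h: "h > 0"
    and du: "\<And>s t. a \<le> s \<Longrightarrow> s \<le> a + h \<Longrightarrow> b \<le> t \<Longrightarrow> t \<le> b + h \<Longrightarrow>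
               ((\<lambda>\<sigma>. f (\<sigma>, t)) has_real_derivative fu (s, t)) (at s)"
    and duv: "\<And>s t. a \<le> s \<Longrightarrow> s \<le> a + h \<Longrightarrow> b \<le> t \<Longrightarrow> t \<le> b + h \<Longrightarrow>
               ((\<lambda>\<tau>. fu (s, \<tau>)) has_real_derivative fuv (s, t)) (at t)"
  obtains \<xi> \<eta> where "a < \<xi>" "\<xi> < a + h" "b < \<eta>" "\<eta> < b + h"
    "f (a + h, b + h) - f (a + h, b) - f (a, b + h) + f (a, b) = h\<^sup>2 * fuv (\<xi>, \<eta>)"
proof -
  have "\<exists>\<xi>>a. \<xi> < a + h \<and> (f (a + h, b + h) - f (a + h, b)) - (f (a, b + h) - f (a, b))
           = (a + h - a) * (fu (\<xi>, b + h) - fu (\<xi>, b))"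
    by (rule MVT2) (use h in \<open>auto intro!: DERIV_diff du\<close>)
  then obtain \<xi> where \<xi>: "a < \<xi>" "\<xi> < a + h"
    and "(f (a + h, b + h) - f (a + h, b)) - (f (a, b + h) - f (a, b))
           = h * (fu (\<xi>, b + h) - fu (\<xi>, b))"
    by auto
  moreover have "\<exists>\<eta>>b. \<eta> < b + h \<and> fu (\<xi>, b + h) - fu (\<xi>, b) = (b + h - b) * fuv (\<xi>, \<eta>)"
    by (rule MVT2) (use h \<xi> in \<open>auto intro!: duv\<close>)
  then obtain \<eta> where \<eta>: "b < \<eta>" "\<eta> < b + h"
    and "fu (\<xi>, b + h) - fu (\<xi>, b) = h * fuv (\<xi>, \<eta>)"
    by auto
  ultimately show ?thesis
    using that[OF \<xi> \<eta>] by (simp add: power2_eq_square algebra_simps)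
qed

lemma square_in_ball:
  assumes "a \<le> s" "s \<le> a + r / 3" "b \<le> t" "t \<le> b + r / 3" "r > 0"
  shows "dist (s, t) (a, b) < r"
proof -
  have "dist (s, t) (a, b) = sqrt ((s - a)\<^sup>2 + (t - b)\<^sup>2)"
    by (simp add: dist_Pair_Pair dist_real_def)
  also have "\<dots> \<le> \<bar>s - a\<bar> + \<bar>t - b\<bar>" by (rule sqrt_sum_squares_le_sum_abs)
  also have "\<dots> < r" using assms by simp
  finally show ?thesis .
qed

text \<open>Schwarz's theorem for real-valued functions: if the mixed derivatives f_uv and f_vu exist
  on an open set and are continuous at p, they agree at p.  Both equal the limit of the second
  difference quotient, computed in the two possible orders.\<close>
lemma schwarz_real:
  fixes f fu fv fuv fvu :: "real \<times> real \<Rightarrow> real"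
  assumes U: "open U" "p \<in> U"
    and du: "\<And>s t. (s, t) \<in> U \<Longrightarrow> ((\<lambda>\<sigma>. f (\<sigma>, t)) has_real_derivative fu (s, t)) (at s)"
    and dv: "\<And>s t. (s, t) \<in> U \<Longrightarrow> ((\<lambda>\<tau>. f (s, \<tau>)) has_real_derivative fv (s, t)) (at t)"
    and duv: "\<And>s t. (s, t) \<in> U \<Longrightarrow> ((\<lambda>\<tau>. fu (s, \<tau>)) has_real_derivative fuv (s, t)) (at t)"
    and dvu: "\<And>s t. (s, t) \<in> U \<Longrightarrow> ((\<lambda>\<sigma>. fv (\<sigma>, t)) has_real_derivative fvu (s, t)) (at s)"
    and cont: "isCont fuv p" "isCont fvu p"
  shows "fuv p = fvu p"
proof (rule ccontr)
  assume "fuv p \<noteq> fvu p"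
  then have d: "\<bar>fuv p - fvu p\<bar> / 2 > 0" (is "?d > 0") by simp
  obtain a b where p: "p = (a, b)" by fastforce
  obtain r where r: "r > 0" "ball p r \<subseteq> U"
    "\<And>q. dist q p < r \<Longrightarrow> \<bar>fuv q - fuv p\<bar> < ?d \<and> \<bar>fvu q - fvu p\<bar> < ?d"
  proof -
    obtain r0 where "r0 > 0" "ball p r0 \<subseteq> U" using U open_contains_ball by blast
    moreover obtain r1 where "r1 > 0" "\<And>q. dist q p < r1 \<Longrightarrow> dist (fuv q) (fuv p) < ?d"
      using cont(1) d continuous_at_eps_delta by metis
    moreover obtain r2 where "r2 > 0" "\<And>q. dist q p < r2 \<Longrightarrow> dist (fvu q) (fvu p) < ?d"
      using cont(2) d continuous_at_eps_delta by metis
    ultimately show ?thesis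
      by (intro that[of "min r0 (min r1 r2)"]) (auto simp: dist_real_def)
  qed
  define h where "h = r / 3"
  have h: "h > 0" using r by (simp add: h_def)
  have near: "dist (s, t) p < r" if "a \<le> s" "s \<le> a + h" "b \<le> t" "t \<le> b + h" for s t
    using square_in_ball[of a s r b t] that r(1) by (simp add: h_def p)
  then have box: "(s, t) \<in> U" if "a \<le> s" "s \<le> a + h" "b \<le> t" "t \<le> b + h" for s t
    using r(2) that by (auto simp: dist_commute)
  obtain \<xi> \<eta> where "a < \<xi>" "\<xi> < a + h" "b < \<eta>" "\<eta> < b + h"
    and \<Delta>1: "f (a + h, b + h) - f (a + h, b) - f (a, b + h) + f (a, b) = h\<^sup>2 * fuv (\<xi>, \<eta>)"
    by (rule second_difference_mvt[OF h, of a b f fu fuv]) (auto intro!: du duv box)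
  then have close1: "\<bar>fuv (\<xi>, \<eta>) - fuv p\<bar> < ?d" using r(3) near by simp
  \<comment> \<open>the same second difference, with the roles of the two parameters exchanged\<close>
  obtain \<eta>' \<xi>' where "b < \<eta>'" "\<eta>' < b + h" "a < \<xi>'" "\<xi>' < a + h"
    and \<Delta>2: "f (a + h, b + h) - f (a, b + h) - f (a + h, b) + f (a, b) = h\<^sup>2 * fvu (\<xi>', \<eta>')"
    by (rule second_difference_mvt[OF h, of b a "\<lambda>(\<tau>, \<sigma>). f (\<sigma>, \<tau>)" "\<lambda>(\<tau>, \<sigma>). fv (\<sigma>, \<tau>)"
        "\<lambda>(\<tau>, \<sigma>). fvu (\<sigma>, \<tau>)"]) (auto intro!: dv dvu box)
  then have close2: "\<bar>fvu (\<xi>', \<eta>') - fvu p\<bar> < ?d" using r(3) near by simp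
  have "h\<^sup>2 * fuv (\<xi>, \<eta>) = h\<^sup>2 * fvu (\<xi>', \<eta>')" using \<Delta>1 \<Delta>2 by linarith
  then have "fuv (\<xi>, \<eta>) = fvu (\<xi>', \<eta>')" using h by simp
  then show False using close1 close2 by (simp add: abs_if split: if_splits)
qed

text \<open>Symmetry of the mixed partials of a C^2 vector-valued function, obtained from the real case
  by taking inner products with the difference of the two mixed partials.\<close>
lemma schwarz:
  fixes f :: "real \<times> real \<Rightarrow> 'a::real_inner"
  assumes U: "open U" "p \<in> U" and f: "Ck_on 2 U f"
  shows "pv (pu f) p = pu (pv f) p"
proof -
  have "Ck_on (Suc (Suc 0)) U f" using f by (simp only: numeral_2_eq_2)
  note f1 = Ck_on_SucD[OF U(1) this]
  note fu = Ck_on_SucD[OF U(1) f1(2)] and fv = Ck_on_SucD[OF U(1) f1(3)]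
  define w where "w = pv (pu f) p - pu (pv f) p"
  have line: "((\<lambda>\<sigma>. g (\<sigma>, t) \<bullet> w) has_real_derivative pu g (s, t) \<bullet> w) (at s)"
    "((\<lambda>\<tau>. g (s, \<tau>) \<bullet> w) has_real_derivative pv g (s, t) \<bullet> w) (at t)"
    if "partials_at g (pu g (s, t)) (pv g (s, t)) (s, t)" for g :: "real \<times> real \<Rightarrow> 'a" and s t
    using has_vector_derivative_inner[OF partials_at_u_line[OF that] has_vector_derivative_const]
      has_vector_derivative_inner[OF partials_at_v_line[OF that] has_vector_derivative_const]
    by simp_all
  have "pv (pu f) p \<bullet> w = pu (pv f) p \<bullet> w"
  proof (rule schwarz_real[OF U, where f = "\<lambda>q. f q \<bullet> w"
        and fu = "\<lambda>q. pu f q \<bullet> w" and fv = "\<lambda>q. pv f q \<bullet> w"])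
    show "isCont (\<lambda>q. pv (pu f) q \<bullet> w) p" "isCont (\<lambda>q. pu (pv f) q \<bullet> w) p"
      using fu(3) fv(2) U Ck_on_continuous continuous_on_eq_continuous_at
      by (fastforce intro!: continuous_intros)+
  qed (use f1(1) fu(1) fv(1) line in auto)
  then have "w \<bullet> w = 0" by (simp add: w_def inner_diff_left)
  then show ?thesis by (simp add: w_def)
qed

lemma inner_zero_partials:
  fixes f g :: "real \<times> real \<Rightarrow> 'a::real_inner"
  assumes U: "open U" "q \<in> U" and zero: "\<forall>r\<in>U. f r \<bullet> g r = 0"
    and df: "partials_at f fu fv q" and dg: "partials_at g gu gv q"
  shows "fu \<bullet> g q + f q \<bullet> gu = 0" "fv \<bullet> g q + f q \<bullet> gv = 0"
proof -
  have "partials_at (\<lambda>r. f r \<bullet> g r) (fu \<bullet> g q + f q \<bullet> gu) (fv \<bullet> g q + f q \<bullet> gv) q"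
    by (rule has_derivative_eq_rhs[OF has_derivative_inner[OF df dg]])
       (auto simp: fun_eq_iff algebra_simps inner_commute)
  moreover have "partials_at (\<lambda>r. f r \<bullet> g r) 0 0 q"
    by (rule has_derivative_transform_within_open[OF _ U]) (use zero in auto)
  ultimately show "fu \<bullet> g q + f q \<bullet> gu = 0" "fv \<bullet> g q + f q \<bullet> gv = 0"
    using partials_unique by blast+
qed

lemma inner_along_v_line:
  fixes f g :: "real \<times> real \<Rightarrow> 'a::real_inner"
  assumes "partials_at f fu fv (s, t)" "partials_at g gu gv (s, t)"
  shows "((\<lambda>\<tau>. f (s, \<tau>) \<bullet> g (s, \<tau>)) has_real_derivative fv \<bullet> g (s, t) + f (s, t) \<bullet> gv) (at t)"
  using has_vector_derivative_inner[OF partials_at_v_line[OF assms(1)] partials_at_v_line[OF assms(2)]] .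

lemma sqrt_abs_has_derivative_zero:
  assumes "(\<Phi> has_real_derivative 0) (at t)" "\<Phi> t \<noteq> 0"
  shows "((\<lambda>s. sqrt \<bar>\<Phi> s\<bar>) has_real_derivative 0) (at t)"
proof -
  have sq: "((\<lambda>s. (\<Phi> s)\<^sup>2) has_real_derivative 0) (at t)"
    using DERIV_power[OF assms(1), of 2] by simp
  have "(\<Phi> t)\<^sup>2 > 0" using assms(2) by simp
  from DERIV_chain2[OF DERIV_real_sqrt[OF this] sq]
  have abs: "((\<lambda>s. \<bar>\<Phi> s\<bar>) has_real_derivative 0) (at t)" by simp
  have "\<bar>\<Phi> t\<bar> > 0" using assms(2) by simp
  from DERIV_chain2[OF DERIV_real_sqrt[OF this] abs] show ?thesis by simp
qed

lemma invariant_quotient_has_derivative: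
  fixes e g m l :: "real \<Rightarrow> real"
  assumes "(e has_real_derivative e') (at t)" "(g has_real_derivative g') (at t)"
    "(m has_real_derivative m') (at t)" "(l has_real_derivative l') (at t)" "g t \<noteq> 0"
  shows "((\<lambda>s. e s * (m s)\<^sup>2 / g s - (l s)\<^sup>2) has_real_derivative
           ((e' * (m t)\<^sup>2 + 2 * e t * m t * m') * g t - e t * (m t)\<^sup>2 * g') / (g t)\<^sup>2 - 2 * l t * l') (at t)"
  using assms by (auto intro!: derivative_eq_intros simp: power2_eq_square)

text \<open>Orthonormality of four vectors, as an unordered condition (invariant under exchanging the first two).\<close>
definition orthonormal4 :: "'a::real_inner \<Rightarrow> 'a \<Rightarrow> 'a \<Rightarrow> 'a \<Rightarrow> bool" where
  "orthonormal4 a b c d \<longleftrightarrow>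
     a \<bullet> a = 1 \<and> b \<bullet> b = 1 \<and> c \<bullet> c = 1 \<and> d \<bullet> d = 1 \<and>
     a \<bullet> b = 0 \<and> a \<bullet> c = 0 \<and> a \<bullet> d = 0 \<and> b \<bullet> c = 0 \<and> b \<bullet> d = 0 \<and> c \<bullet> d = 0"

lemma orthonormal4_swap: "orthonormal4 b a c d \<longleftrightarrow> orthonormal4 a b c d"
  by (auto simp: orthonormal4_def inner_commute)

lemma pos_orthonormal_orthonormal4: "pos_orthonormal a b c d \<Longrightarrow> orthonormal4 a b c d"
proof -
  assume "pos_orthonormal a b c d"
  then have L: "\<forall>i<4. \<forall>j<4. ([a, b, c, d] ! i) \<bullet> ([a, b, c, d] ! j) = (if i = j then 1 else 0)"
    unfolding pos_orthonormal_def Let_def by blast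
  show ?thesis
    unfolding orthonormal4_def
    using L[rule_format, of 0 0] L[rule_format, of 1 1] L[rule_format, of 2 2] L[rule_format, of 3 3]
      L[rule_format, of 0 1] L[rule_format, of 0 2] L[rule_format, of 0 3] L[rule_format, of 1 2]
      L[rule_format, of 1 3] L[rule_format, of 2 3]
    by simp
qed

text \<open>Unlike the geometric frame, this notion is symmetric under exchanging u and v.\<close>
definition semicanonical_normal_frame ::
  "(real \<times> real) set \<Rightarrow> (real \<times> real \<Rightarrow> real^4) \<Rightarrow> (real \<times> real \<Rightarrow> real^4) \<Rightarrow>
   (real \<times> real \<Rightarrow> real^4) \<Rightarrow> (real \<times> real \<Rightarrow> real^4) \<Rightarrow> (real \<times> real \<Rightarrow> real^4) \<Rightarrow>
   (real \<times> real \<Rightarrow> real) \<Rightarrow> (real \<times> real \<Rightarrow> real) \<Rightarrow> (real \<times> real \<Rightarrow> real) \<Rightarrow>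
   (real \<times> real \<Rightarrow> real) \<Rightarrow> bool" where
  "semicanonical_normal_frame U z x y n1 n2 \<nu> \<mu> \<beta>1 \<beta>2 \<longleftrightarrow>
     open U \<and> Ck_on 3 U z \<and> Ck_on 1 U n1 \<and> Ck_on 1 U n2 \<and>
     (\<forall>q\<in>U.
        fundE z q > 0 \<and> fundG z q > 0 \<and>
        pu z q = sqrt (fundE z q) *\<^sub>R x q \<and> pv z q = sqrt (fundG z q) *\<^sub>R y q \<and>
        orthonormal4 (x q) (y q) (n1 q) (n2 q) \<and> (\<mu> q)\<^sup>2 \<noteq> (\<nu> q)\<^sup>2 \<and>
        pu n1 q = sqrt (fundE z q) *\<^sub>R (- \<nu> q *\<^sub>R x q + \<beta>1 q *\<^sub>R n2 q) \<and>
        pv n1 q = sqrt (fundG z q) *\<^sub>R (\<nu> q *\<^sub>R y q + \<beta>2 q *\<^sub>R n2 q) \<and>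
        pu n2 q = sqrt (fundE z q) *\<^sub>R (- \<mu> q *\<^sub>R y q - \<beta>1 q *\<^sub>R n1 q) \<and>
        pv n2 q = sqrt (fundG z q) *\<^sub>R (- \<mu> q *\<^sub>R x q - \<beta>2 q *\<^sub>R n1 q))"

lemma scaleR_inverse_eq:
  fixes X Y :: "'a::real_vector"
  assumes "c \<noteq> 0"
  shows "(1 / c) *\<^sub>R Y = X \<longleftrightarrow> Y = c *\<^sub>R X"
  using assms by auto

lemma geometric_frame_normal_frame:
  assumes "semicanonical_geometric_frame U z x y n1 n2 \<nu> \<mu> \<gamma>1 \<gamma>2 \<beta>1 \<beta>2"
  shows "semicanonical_normal_frame U z x y n1 n2 \<nu> \<mu> \<beta>1 \<beta>2"
proof -
  note frame = assms[unfolded semicanonical_geometric_frame_def]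
  have "Ck_on 3 U z" "Ck_on 1 U n1" "Ck_on 1 U n2"
    using frame by (simp_all add: smooth_on2_def del: Ck_on.simps)
  moreover have "fundE z q > 0 \<and> fundG z q > 0 \<and>
        pu z q = sqrt (fundE z q) *\<^sub>R x q \<and> pv z q = sqrt (fundG z q) *\<^sub>R y q \<and>
        orthonormal4 (x q) (y q) (n1 q) (n2 q) \<and> (\<mu> q)\<^sup>2 \<noteq> (\<nu> q)\<^sup>2 \<and>
        pu n1 q = sqrt (fundE z q) *\<^sub>R (- \<nu> q *\<^sub>R x q + \<beta>1 q *\<^sub>R n2 q) \<and>
        pv n1 q = sqrt (fundG z q) *\<^sub>R (\<nu> q *\<^sub>R y q + \<beta>2 q *\<^sub>R n2 q) \<and>
        pu n2 q = sqrt (fundE z q) *\<^sub>R (- \<mu> q *\<^sub>R y q - \<beta>1 q *\<^sub>R n1 q) \<and>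
        pv n2 q = sqrt (fundG z q) *\<^sub>R (- \<mu> q *\<^sub>R x q - \<beta>2 q *\<^sub>R n1 q)" if "q \<in> U" for q
  proof -
    have E: "fundE z q > 0" and G: "fundG z q > 0"
      and x: "x q = (1 / sqrt (fundE z q)) *\<^sub>R pu z q"
      and y: "y q = (1 / sqrt (fundG z q)) *\<^sub>R pv z q"
      and o: "pos_orthonormal (x q) (y q) (n1 q) (n2 q)" and \<mu>\<nu>: "(\<mu> q)\<^sup>2 \<noteq> (\<nu> q)\<^sup>2"
      and n1u: "(1 / sqrt (fundE z q)) *\<^sub>R pu n1 q = - \<nu> q *\<^sub>R x q + \<beta>1 q *\<^sub>R n2 q"
      and n1v: "(1 / sqrt (fundG z q)) *\<^sub>R pv n1 q = \<nu> q *\<^sub>R y q + \<beta>2 q *\<^sub>R n2 q"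
      and n2u: "(1 / sqrt (fundE z q)) *\<^sub>R pu n2 q = - \<mu> q *\<^sub>R y q - \<beta>1 q *\<^sub>R n1 q"
      and n2v: "(1 / sqrt (fundG z q)) *\<^sub>R pv n2 q = - \<mu> q *\<^sub>R x q - \<beta>2 q *\<^sub>R n1 q"
      using frame that by blast+
    then have "sqrt (fundE z q) \<noteq> 0" "sqrt (fundG z q) \<noteq> 0" by simp_all
    note E_inv = scaleR_inverse_eq[OF this(1)] and G_inv = scaleR_inverse_eq[OF this(2)]
    show ?thesis
      using E G x[symmetric] y[symmetric] n1u n1v n2u n2v
      by (simp only: E_inv G_inv pos_orthonormal_orthonormal4[OF o] \<mu>\<nu> simp_thms)
  qed
  ultimately show ?thesis
    using frame by (simp add: semicanonical_normal_frame_def del: Ck_on.simps)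
qed

lemma fundE_swap: "fundE (z \<circ> prod.swap) q = fundG z (prod.swap q)"
  and fundG_swap: "fundG (z \<circ> prod.swap) q = fundE z (prod.swap q)"
  by (simp_all add: fundE_def fundG_def pu_swap pv_swap)

lemma normal_frame_swap:
  assumes "semicanonical_normal_frame U z x y n1 n2 \<nu> \<mu> \<beta>1 \<beta>2"
  shows "semicanonical_normal_frame (prod.swap -` U) (z \<circ> prod.swap) (y \<circ> prod.swap) (x \<circ> prod.swap)
           (n1 \<circ> prod.swap) (n2 \<circ> prod.swap) (\<lambda>q. - \<nu> (prod.swap q)) (\<mu> \<circ> prod.swap)
           (\<beta>2 \<circ> prod.swap) (\<beta>1 \<circ> prod.swap)"
proof -
  note frame = assms[unfolded semicanonical_normal_frame_def]
  have "open (prod.swap -` U)"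
    using frame open_vimage[of U prod.swap] by (simp add: continuous_on_swap)
  moreover have "Ck_on 3 (prod.swap -` U) (z \<circ> prod.swap)" "Ck_on 1 (prod.swap -` U) (n1 \<circ> prod.swap)"
    "Ck_on 1 (prod.swap -` U) (n2 \<circ> prod.swap)"
    using frame Ck_on_swap by blast+
  ultimately show ?thesis
    using frame unfolding semicanonical_normal_frame_def
    by (simp add: fundE_swap fundG_swap pu_swap pv_swap orthonormal4_swap algebra_simps del: Ck_on.simps)
qed

text \<open>Pointwise algebra: differentiating z_u . n_i = 0 and z_v . n_i = 0 and inserting the
  Weingarten formulas gives the second fundamental form in the frame: L = z_uu . n1 = E nu,
  M = z_uv . n2 = sqrt(EG) mu, N = z_vv . n1 = -G nu, the remaining components vanish.\<close>
lemma second_fundamental_form_algebra: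
  fixes x y n1 n2 Zu Zv Zuu Zuv Zvv N1u N1v N2u N2v :: "'a::real_inner"
  assumes o: "orthonormal4 x y n1 n2" and EG: "E > 0" "G > 0"
    and Z: "Zu = sqrt E *\<^sub>R x" "Zv = sqrt G *\<^sub>R y"
    and N: "N1u = sqrt E *\<^sub>R (- \<nu> *\<^sub>R x + \<beta>1 *\<^sub>R n2)" "N1v = sqrt G *\<^sub>R (\<nu> *\<^sub>R y + \<beta>2 *\<^sub>R n2)"
      "N2u = sqrt E *\<^sub>R (- \<mu> *\<^sub>R y - \<beta>1 *\<^sub>R n1)" "N2v = sqrt G *\<^sub>R (- \<mu> *\<^sub>R x - \<beta>2 *\<^sub>R n1)"
    and K: "Zuu \<bullet> n1 + Zu \<bullet> N1u = 0" "Zuv \<bullet> n1 + Zu \<bullet> N1v = 0"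
      "Zuu \<bullet> n2 + Zu \<bullet> N2u = 0" "Zuv \<bullet> n2 + Zu \<bullet> N2v = 0"
      "Zvv \<bullet> n1 + Zv \<bullet> N1v = 0" "Zvv \<bullet> n2 + Zv \<bullet> N2v = 0"
  shows "Zuu \<bullet> n1 = E * \<nu>" "Zuv \<bullet> n2 = sqrt E * sqrt G * \<mu>" "Zuu \<bullet> n2 = 0" "Zuv \<bullet> n1 = 0"
    "Zvv \<bullet> n1 = - G * \<nu>" "Zvv \<bullet> n2 = 0"
  using K EG unfolding Z N
  by (simp_all add: o[unfolded orthonormal4_def] inner_add_right inner_diff_right inner_commute[of y x]
      algebra_simps flip: power2_eq_square)

text \<open>Pointwise algebra behind the Codazzi computation: with the values of the second fundamental
  form and z_uu . z_v + z_u . z_uv = 0, the v-derivative of E M^2 / G - L^2 cancels.\<close>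
lemma curvature_invariant_derivative_algebra:
  fixes x y n1 n2 Zu Zv Zuu Zuv Zvv N1u N1v N2u N2v :: "'a::real_inner"
  assumes o: "orthonormal4 x y n1 n2" and EG: "E > 0" "G > 0"
    and Z: "Zu = sqrt E *\<^sub>R x" "Zv = sqrt G *\<^sub>R y"
    and N: "N1u = sqrt E *\<^sub>R (- \<nu> *\<^sub>R x + \<beta>1 *\<^sub>R n2)" "N1v = sqrt G *\<^sub>R (\<nu> *\<^sub>R y + \<beta>2 *\<^sub>R n2)"
      "N2u = sqrt E *\<^sub>R (- \<mu> *\<^sub>R y - \<beta>1 *\<^sub>R n1)" "N2v = sqrt G *\<^sub>R (- \<mu> *\<^sub>R x - \<beta>2 *\<^sub>R n1)"
    and II: "Zuu \<bullet> n1 = E * \<nu>" "Zuv \<bullet> n2 = sqrt E * sqrt G * \<mu>" "Zuu \<bullet> n2 = 0" "Zuv \<bullet> n1 = 0"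
      "Zvv \<bullet> n1 = - G * \<nu>"
    and orth_u: "Zuu \<bullet> Zv + Zu \<bullet> Zuv = 0"
  shows "(((Zuv \<bullet> Zu + Zu \<bullet> Zuv) * (Zuv \<bullet> n2)\<^sup>2
            + 2 * E * (Zuv \<bullet> n2) * (- (Zvv \<bullet> N2u) + Zuv \<bullet> N2v)) * G
          - E * (Zuv \<bullet> n2)\<^sup>2 * (Zvv \<bullet> Zv + Zv \<bullet> Zvv)) / G\<^sup>2
         - 2 * (Zuu \<bullet> n1) * (- (Zuv \<bullet> N1u) + Zuu \<bullet> N1v) = 0"
proof -
  define a b where "a = sqrt E" and "b = sqrt G"
  have ab: "a > 0" "b > 0" and E: "E = a\<^sup>2" and G: "G = b\<^sup>2"
    using EG by (simp_all add: a_def b_def)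
  have Zu: "Zu = a *\<^sub>R x" and Zv: "Zv = b *\<^sub>R y" using Z by (simp_all add: a_def b_def)
  have P: "Zuu \<bullet> n1 = a\<^sup>2 * \<nu>" using II(1) E by simp
  have Q: "Zuv \<bullet> n2 = a * b * \<mu>" using II(2) by (simp add: a_def b_def)
  have R: "Zvv \<bullet> n1 = - b\<^sup>2 * \<nu>" using II(5) G by simp
  have y_Zuu: "Zuu \<bullet> y = - a / b * (Zuv \<bullet> x)"
    using orth_u ab unfolding Zu Zv by (simp add: inner_commute field_simps)
  have sym: "Zu \<bullet> Zuv = Zuv \<bullet> Zu" "Zv \<bullet> Zvv = Zvv \<bullet> Zv" by (simp_all add: inner_commute)
  note o' = o[unfolded orthonormal4_def]
  show ?thesis
    unfolding sym N a_def[symmetric] b_def[symmetric] E G Zu Zv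
    using ab
    apply (simp add: inner_add_right inner_diff_right P Q R II(3,4) y_Zuu o')
    apply (simp add: field_simps power2_eq_square eval_nat_numeral inner_commute[of x Zuv] inner_commute[of y Zvv])
    done
qed

lemma normal_frame_regularity:
  assumes "semicanonical_normal_frame U z x y n1 n2 \<nu> \<mu> \<beta>1 \<beta>2"
  shows "open U" "Ck_on 2 U z" "Ck_on 2 U (pu z)" "Ck_on 2 U (pv z)" "Ck_on 1 U n1" "Ck_on 1 U n2"
proof -
  have U: "open U" and z: "Ck_on (Suc 2) U z" and "Ck_on 1 U n1" "Ck_on 1 U n2"
    using assms by (simp_all add: semicanonical_normal_frame_def del: Ck_on.simps)
  then show "open U" "Ck_on 1 U n1" "Ck_on 1 U n2" "Ck_on 2 U z"
    using Ck_on_Suc_imp by blast+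
  show "Ck_on 2 U (pu z)" "Ck_on 2 U (pv z)" using Ck_on_SucD[OF U z] by blast+
qed

lemma normal_frame_partials:
  assumes F: "semicanonical_normal_frame U z x y n1 n2 \<nu> \<mu> \<beta>1 \<beta>2" and q: "q \<in> U"
    and f: "f \<in> {z, pu z, pv z, pu (pu z), pv (pu z), pv (pv z), n1, n2}"
  shows "partials_at f (pu f q) (pv f q) q"
proof -
  note reg = normal_frame_regularity[OF F]
  have C2: "Ck_on (Suc 1) U z" "Ck_on (Suc 1) U (pu z)" "Ck_on (Suc 1) U (pv z)"
    and C1: "Ck_on (Suc 0) U n1" "Ck_on (Suc 0) U n2"
    using reg by (simp_all only: Suc_1 flip: One_nat_def)
  note zu = Ck_on_SucD[OF reg(1) C2(2)] and zv = Ck_on_SucD[OF reg(1) C2(3)]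
  have "Ck_on (Suc 0) U (pu (pu z))" "Ck_on (Suc 0) U (pv (pu z))" "Ck_on (Suc 0) U (pv (pv z))"
    using zu zv by (simp_all del: Ck_on.simps)
  then show ?thesis
    using f q Ck_on_SucD(1)[OF reg(1)] C1 C2 by blast
qed

lemma normal_frame_mixed_partials:
  assumes F: "semicanonical_normal_frame U z x y n1 n2 \<nu> \<mu> \<beta>1 \<beta>2" and q: "q \<in> U"
  shows "pu (pv z) q = pv (pu z) q" "pv (pu (pu z)) q = pu (pv (pu z)) q"
    "pv (pv (pu z)) q = pu (pv (pv z)) q"
proof -
  note reg = normal_frame_regularity[OF F]
  have uv: "pv (pu z) r = pu (pv z) r" if "r \<in> U" for r
    using schwarz[OF reg(1) that reg(2)] .
  then show "pu (pv z) q = pv (pu z) q" using q by simp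
  show "pv (pu (pu z)) q = pu (pv (pu z)) q" using schwarz[OF reg(1) q reg(3)] .
  have "pv (pv (pu z)) q = pv (pu (pv z)) q" using pv_cong_open[OF reg(1) q] uv by blast
  also have "\<dots> = pu (pv (pv z)) q" using schwarz[OF reg(1) q reg(4)] .
  finally show "pv (pv (pu z)) q = pu (pv (pv z)) q" .
qed

lemma normal_frame_at:
  assumes "semicanonical_normal_frame U z x y n1 n2 \<nu> \<mu> \<beta>1 \<beta>2" and "q \<in> U"
  shows "orthonormal4 (x q) (y q) (n1 q) (n2 q)" "fundE z q > 0" "fundG z q > 0"
    "pu z q = sqrt (fundE z q) *\<^sub>R x q" "pv z q = sqrt (fundG z q) *\<^sub>R y q"
    "pu n1 q = sqrt (fundE z q) *\<^sub>R (- \<nu> q *\<^sub>R x q + \<beta>1 q *\<^sub>R n2 q)"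
    "pv n1 q = sqrt (fundG z q) *\<^sub>R (\<nu> q *\<^sub>R y q + \<beta>2 q *\<^sub>R n2 q)"
    "pu n2 q = sqrt (fundE z q) *\<^sub>R (- \<mu> q *\<^sub>R y q - \<beta>1 q *\<^sub>R n1 q)"
    "pv n2 q = sqrt (fundG z q) *\<^sub>R (- \<mu> q *\<^sub>R x q - \<beta>2 q *\<^sub>R n1 q)"
  using assms by (simp_all add: semicanonical_normal_frame_def del: Ck_on.simps)

lemma normal_frame_orthogonality:
  assumes F: "semicanonical_normal_frame U z x y n1 n2 \<nu> \<mu> \<beta>1 \<beta>2" and q: "q \<in> U"
  shows "pu z q \<bullet> n1 q = 0" "pu z q \<bullet> n2 q = 0" "pv z q \<bullet> n1 q = 0" "pv z q \<bullet> n2 q = 0"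
    "pu z q \<bullet> pv z q = 0"
  using normal_frame_at[OF F q] by (simp_all add: orthonormal4_def)

lemma second_fundamental_coefficients:
  assumes F: "semicanonical_normal_frame U z x y n1 n2 \<nu> \<mu> \<beta>1 \<beta>2" and q: "q \<in> U"
  shows "pu (pu z) q \<bullet> n1 q = fundE z q * \<nu> q"
    "pv (pu z) q \<bullet> n2 q = sqrt (fundE z q) * sqrt (fundG z q) * \<mu> q"
    "pu (pu z) q \<bullet> n2 q = 0" "pv (pu z) q \<bullet> n1 q = 0"
    "pv (pv z) q \<bullet> n1 q = - fundG z q * \<nu> q" "pv (pv z) q \<bullet> n2 q = 0"
proof -
  note U = normal_frame_regularity(1)[OF F]
  note d = normal_frame_partials[OF F q]
  have zero: "\<forall>r\<in>U. pu z r \<bullet> n1 r = 0" "\<forall>r\<in>U. pu z r \<bullet> n2 r = 0"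
    "\<forall>r\<in>U. pv z r \<bullet> n1 r = 0" "\<forall>r\<in>U. pv z r \<bullet> n2 r = 0"
    using normal_frame_orthogonality[OF F] by blast+
  note K = inner_zero_partials[OF U q zero(1) d d, simplified] inner_zero_partials[OF U q zero(2) d d, simplified]
    inner_zero_partials[OF U q zero(3) d d, simplified] inner_zero_partials[OF U q zero(4) d d, simplified]
  from second_fundamental_form_algebra[OF normal_frame_at[OF F q] K(1,2,3,4) K(6,8)]
  show "pu (pu z) q \<bullet> n1 q = fundE z q * \<nu> q"
    "pv (pu z) q \<bullet> n2 q = sqrt (fundE z q) * sqrt (fundG z q) * \<mu> q"
    "pu (pu z) q \<bullet> n2 q = 0" "pv (pu z) q \<bullet> n1 q = 0"
    "pv (pv z) q \<bullet> n1 q = - fundG z q * \<nu> q" "pv (pv z) q \<bullet> n2 q = 0" by simp_all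
qed

text \<open>The invariant E M^2 / G - L^2, built from derivatives of z and the normals only.  By the previous
  lemma it equals E^2 (mu^2 - nu^2), but it is differentiable without differentiating mu or nu.\<close>
definition curvature_invariant ::
  "(real \<times> real \<Rightarrow> real^4) \<Rightarrow> (real \<times> real \<Rightarrow> real^4) \<Rightarrow> (real \<times> real \<Rightarrow> real^4) \<Rightarrow> real \<times> real \<Rightarrow> real"
  where "curvature_invariant z n1 n2 q =
    fundE z q * (pv (pu z) q \<bullet> n2 q)\<^sup>2 / fundG z q - (pu (pu z) q \<bullet> n1 q)\<^sup>2"

lemma curvature_invariant_value:
  assumes F: "semicanonical_normal_frame U z x y n1 n2 \<nu> \<mu> \<beta>1 \<beta>2" and q: "q \<in> U"
  shows "curvature_invariant z n1 n2 q = (fundE z q)\<^sup>2 * ((\<mu> q)\<^sup>2 - (\<nu> q)\<^sup>2)"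
proof -
  from normal_frame_at(2,3)[OF F q] show ?thesis
    unfolding curvature_invariant_def second_fundamental_coefficients[OF F q]
    by (simp add: power_mult_distrib field_simps power2_eq_square)
qed

text \<open>Its v-derivative involves
  (z_uu . n1)_v and (z_uv . n2)_v, which the Codazzi-type identities, obtained from the symmetry of
  third derivatives and z_uv . n1 = z_vv . n2 = 0, express through first and second order data;
  then the pointwise algebra shows that the derivative vanishes.\<close>
lemma curvature_invariant_deriv_v:
  assumes F: "semicanonical_normal_frame U z x y n1 n2 \<nu> \<mu> \<beta>1 \<beta>2" and p: "p \<in> U"
  shows "((\<lambda>t. curvature_invariant z n1 n2 (fst p, t)) has_real_derivative 0) (at (snd p))"
proof -
  obtain u0 v0 where p_eq: "p = (u0, v0)" by fastforce
  note U = normal_frame_regularity(1)[OF F]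
  note d = normal_frame_partials[OF F p]
  note line = inner_along_v_line[OF d[unfolded p_eq] d[unfolded p_eq], simplified]
  note mixed = normal_frame_mixed_partials[OF F p]
  note II = second_fundamental_coefficients[OF F]
  have "\<forall>r\<in>U. pv (pu z) r \<bullet> n1 r = 0" "\<forall>r\<in>U. pv (pv z) r \<bullet> n2 r = 0" "\<forall>r\<in>U. pu z r \<bullet> pv z r = 0"
    using II(4,6) normal_frame_orthogonality(5)[OF F] by blast+
  note codazzi = inner_zero_partials(1)[OF U p this(1) d d, simplified, folded eq_neg_iff_add_eq_0]
    inner_zero_partials(1)[OF U p this(2) d d, simplified, folded eq_neg_iff_add_eq_0]
    inner_zero_partials(1)[OF U p this(3) d d, simplified, folded eq_neg_iff_add_eq_0]
  have dE: "((\<lambda>t. fundE z (u0, t)) has_real_derivative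
      pv (pu z) p \<bullet> pu z p + pu z p \<bullet> pv (pu z) p) (at v0)"
    unfolding fundE_def using line[of "pu z" "pu z"] p_eq by simp
  have dG: "((\<lambda>t. fundG z (u0, t)) has_real_derivative
      pv (pv z) p \<bullet> pv z p + pv z p \<bullet> pv (pv z) p) (at v0)"
    unfolding fundG_def using line[of "pv z" "pv z"] p_eq by simp
  have dM: "((\<lambda>t. pv (pu z) (u0, t) \<bullet> n2 (u0, t)) has_real_derivative
      - (pv (pv z) p \<bullet> pu n2 p) + pv (pu z) p \<bullet> pv n2 p) (at v0)"
    using line[of "pv (pu z)" n2] mixed(3) codazzi(2) p_eq by simp
  have dL: "((\<lambda>t. pu (pu z) (u0, t) \<bullet> n1 (u0, t)) has_real_derivative
      - (pv (pu z) p \<bullet> pu n1 p) + pu (pu z) p \<bullet> pv n1 p) (at v0)"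
    using line[of "pu (pu z)" n1] mixed(2) codazzi(1) p_eq by simp
  note frame = normal_frame_at[OF F p]
  have "pu (pu z) p \<bullet> pv z p + pu z p \<bullet> pv (pu z) p = 0" using codazzi(3) mixed(1) by simp
  note cancel = curvature_invariant_derivative_algebra[OF frame II(1-5)[OF p] this]
  have "fundG z (u0, v0) \<noteq> 0" using frame(3) p_eq by simp
  from invariant_quotient_has_derivative[OF dE dG dM dL this]
  show ?thesis
    using cancel p_eq by (simp add: curvature_invariant_def fundE_def fundG_def)
qed

text \<open>Consequently E sqrt|mu^2 - nu^2| = sqrt|E^2 (mu^2 - nu^2)| does not depend on v.\<close>
lemma fundE_sqrt_const_along_v:
  assumes F: "semicanonical_normal_frame U z x y n1 n2 \<nu> \<mu> \<beta>1 \<beta>2" and p: "p \<in> U"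
  shows "((\<lambda>t. fundE z (fst p, t) * sqrt \<bar>(\<mu> (fst p, t))\<^sup>2 - (\<nu> (fst p, t))\<^sup>2\<bar>)
           has_real_derivative 0) (at (snd p))"
proof -
  obtain u0 v0 where p_eq: "p = (u0, v0)" by fastforce
  define \<Phi> where "\<Phi> = (\<lambda>t. curvature_invariant z n1 n2 (u0, t))"
  have pos: "fundE z q > 0" "(\<mu> q)\<^sup>2 \<noteq> (\<nu> q)\<^sup>2" if "q \<in> U" for q
    using F that by (simp_all add: semicanonical_normal_frame_def del: Ck_on.simps)
  have "(\<Phi> has_real_derivative 0) (at v0)"
    using curvature_invariant_deriv_v[OF F p] p_eq by (simp add: \<Phi>_def)
  moreover have "\<Phi> v0 \<noteq> 0"
    using curvature_invariant_value[OF F p] pos[OF p] p_eq by (simp add: \<Phi>_def)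
  ultimately have "((\<lambda>t. sqrt \<bar>\<Phi> t\<bar>) has_real_derivative 0) (at v0)"
    by (rule sqrt_abs_has_derivative_zero)
  then have "((\<lambda>t. fundE z (u0, t) * sqrt \<bar>(\<mu> (u0, t))\<^sup>2 - (\<nu> (u0, t))\<^sup>2\<bar>)
               has_real_derivative 0) (at v0)"
  proof (rule has_field_derivative_transform_within_open)
    show "open {t. (u0, t) \<in> U}" using normal_frame_regularity(1)[OF F] by (rule open_v_line)
    show "v0 \<in> {t. (u0, t) \<in> U}" using p p_eq by simp
    fix t assume "t \<in> {t. (u0, t) \<in> U}"
    then have q: "(u0, t) \<in> U" by simp
    show "sqrt \<bar>\<Phi> t\<bar> = fundE z (u0, t) * sqrt \<bar>(\<mu> (u0, t))\<^sup>2 - (\<nu> (u0, t))\<^sup>2\<bar>"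
      using curvature_invariant_value[OF F q] pos(1)[OF q] by (simp add: \<Phi>_def abs_mult real_sqrt_mult)
  qed
  then show ?thesis using p_eq by simp
qed

theorem lemma6p1:
  fixes U :: "(real \<times> real) set" and z x y n1 n2 :: "real \<times> real \<Rightarrow> real^4"
    and \<nu> \<mu> \<gamma>1 \<gamma>2 \<beta>1 \<beta>2 :: "real \<times> real \<Rightarrow> real"
  assumes frame: "semicanonical_geometric_frame U z x y n1 n2 \<nu> \<mu> \<gamma>1 \<gamma>2 \<beta>1 \<beta>2"
    and strongly_regular: "\<forall>p\<in>U. \<gamma>1 p * \<gamma>2 p \<noteq> 0"
  shows "(\<forall>p\<in>U. ((\<lambda>t. fundE z (fst p, t) * sqrt \<bar>(\<mu> (fst p, t))\<^sup>2 - (\<nu> (fst p, t))\<^sup>2\<bar>)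
                    has_real_derivative 0) (at (snd p))) \<and>
         (\<forall>p\<in>U. ((\<lambda>t. fundG z (t, snd p) * sqrt \<bar>(\<mu> (t, snd p))\<^sup>2 - (\<nu> (t, snd p))\<^sup>2\<bar>)
                    has_real_derivative 0) (at (fst p)))"
proof (intro conjI ballI)
  note N = geometric_frame_normal_frame[OF frame]
  fix p assume p: "p \<in> U"
  show "((\<lambda>t. fundE z (fst p, t) * sqrt \<bar>(\<mu> (fst p, t))\<^sup>2 - (\<nu> (fst p, t))\<^sup>2\<bar>)
          has_real_derivative 0) (at (snd p))"
    using fundE_sqrt_const_along_v[OF N p] .
  have "prod.swap p \<in> prod.swap -` U" using p by simp
  from fundE_sqrt_const_along_v[OF normal_frame_swap[OF N] this]
  show "((\<lambda>t. fundG z (t, snd p) * sqrt \<bar>(\<mu> (t, snd p))\<^sup>2 - (\<nu> (t, snd p))\<^sup>2\<bar>)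
          has_real_derivative 0) (at (fst p))"
    by (simp add: fundE_swap)
qed

end
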